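(* Let $\phi(\beta)=\sum_{k=0}^\infty k!\,\beta^k$ as a formal power series. Then for all integers $n\ge1$ and $k\ge0$, \[ [\beta^k]\,\phi(\beta)^n\le k!\prod_{j=1}^k\Big(1+\frac{n-1}{j^2}\Big)\le 6^n\,k!. \] Equivalently, $\sum_{l_1+\dots+l_n=k,\ l_i\ge0}\prod_{i=1}^n l_i!\le k!\prod_{j=1}^k(1+(n-1)/j^2)$.
   Context: $[\beta^k]F(\beta)$ denotes the coefficient of $\beta^k$ in the formal power series $F$. *)

theory Defs
  imports "HOL-Computational_Algebra.Formal_Power_Series"
begin

definition phi_fps :: "real fps" where
  "phi_fps = Abs_fps (\<lambda>k. fact k)"

end

theory Submission imports Defs begin

(* Write a n k for the k-th coefficient of phi^n, where phi = sum_k k! X^k, and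
   W m k = prod_{j=1..k} (1 + (m-1)/j^2).  The proof has two halves.

   Upper bound.  phi satisfies the differential equation phi = 1 + X phi + X^2 phi',
   which for powers yields the coefficient recurrence
       a (n+1) (k+1) = a n (k+1) + (n+1+k)/(n+1) * a (n+1) k.
   A double induction (on n, then k) gives a n k <= k! W n k, provided the
   products satisfy W m (k+1) + (m+1+k)/((m+1)(k+1)) W (m+1) k <= W (m+1) (k+1).
   This purely numerical inequality follows from an auxiliary bound on the ratio
   W m k / W (m+1) k, proved by induction on k for every real m >= 0.

   Exponential bound.  By Bernoulli's inequality W n k <= (prod_j (1 + 1/j^2))^(n-1),
   and a telescoping estimate shows prod_{j=1..k} (1 + 1/j^2) <= 4, so W n k <= 6^n. *)

unbundle fps_syntax

lemma phi_fps_nth [simp]: "phi_fps $ k = fact k"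
  by (simp add: phi_fps_def)

text \<open>The generating function of the factorials solves the Euler-type differential
  equation coming from the recurrence (k+2)! = (k+1)! + (k+1) (k+1)!.\<close>

lemma phi_fps_ode: "phi_fps = 1 + fps_X * phi_fps + fps_X^2 * fps_deriv phi_fps"
proof (rule fps_ext)
  fix k
  show "phi_fps $ k = (1 + fps_X * phi_fps + fps_X^2 * fps_deriv phi_fps) $ k"
  proof (cases k)
    case (Suc k')
    then show ?thesis
    proof (cases k')
      case (Suc j)
      have "fact (Suc (Suc j)) = (fact (Suc j) :: real) + real (Suc j) * fact (Suc j)"
        by (simp add: algebra_simps)
      then show ?thesis using \<open>k = Suc k'\<close> Suc by (simp add: fps_X_power_mult_nth)
    qed (simp add: fps_X_power_mult_nth)
  qed (simp add: fps_X_power_mult_nth)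
qed

text \<open>Coefficient recurrence for the powers of phi, obtained by comparing the
  coefficients of X^(k+1) in X^2 (phi^(n+1))' = (n+1) (phi^(n+1) - phi^n - X phi^(n+1)).\<close>

lemma phi_power_coeff_rec:
  "(phi_fps ^ Suc n) $ Suc k
     = (phi_fps ^ n) $ Suc k + (real (Suc n) + real k) / real (Suc n) * (phi_fps ^ Suc n) $ k"
proof -
  let ?p = phi_fps
  have "fps_X^2 * fps_deriv (?p ^ Suc n) = fps_const (of_nat (Suc n)) * ?p ^ n * (fps_X^2 * fps_deriv ?p)"
    by (simp only: fps_deriv_power diff_Suc_1 mult_ac)
  also have "fps_X^2 * fps_deriv ?p = ?p - 1 - fps_X * ?p"
    using phi_fps_ode by (simp add: algebra_simps)
  finally have ode: "fps_X^2 * fps_deriv (?p ^ Suc n)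
      = fps_const (of_nat (Suc n)) * (?p ^ Suc n - ?p ^ n - fps_X * ?p ^ Suc n)"
    by (simp add: algebra_simps)
  have "(fps_X^2 * fps_deriv (?p ^ Suc n)) $ Suc k = real k * (?p ^ Suc n) $ k"
    by (cases k) (simp_all only: fps_X_power_mult_nth fps_deriv_nth, simp_all)
  then have "real k * (?p ^ Suc n) $ k
      = real (Suc n) * ((?p ^ Suc n) $ Suc k - (?p ^ n) $ Suc k - (?p ^ Suc n) $ k)"
    unfolding ode by simp
  then show ?thesis by (simp add: field_simps)
qed

definition weight_prod :: "real \<Rightarrow> nat \<Rightarrow> real" where
  "weight_prod m k = (\<Prod>j=1..k. 1 + (m - 1) / (real j)^2)"

lemma weight_prod_0 [simp]: "weight_prod m 0 = 1"
  by (simp add: weight_prod_def)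

lemma weight_prod_Suc:
  "weight_prod m (Suc k) = weight_prod m k * (1 + (m - 1) / (real (Suc k))^2)"
  by (simp add: weight_prod_def prod.cl_ivl_Suc)

lemma weight_prod_zero_param: "weight_prod 0 (Suc k) = 0"
  unfolding weight_prod_def by (rule prod_zero) (auto intro!: bexI[of _ 1])

lemma weight_prod_nonneg:
  assumes "m \<ge> 0"
  shows "weight_prod m k \<ge> 0"
  unfolding weight_prod_def
proof (rule prod_nonneg)
  fix j assume "j \<in> {1..k}"
  then have "1 / (real j)^2 \<le> 1" by simp
  then have "(m - 1) / (real j)^2 \<ge> -1"
    using assms by (smt (verit) divide_right_mono zero_le_power2 diff_divide_distrib)
  then show "0 \<le> 1 + (m - 1) / (real j)^2" by simp
qed

text \<open>The ratio bound W m k / W (m+1) k <= m (k^2+k+m+1) / ((m+1) (k^2+2k+m)), in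
  cleared-denominator form.  It is the induction invariant that makes the step
  inequality below go through.\<close>

lemma weight_prod_ratio_bound:
  fixes m :: real
  assumes m0: "m \<ge> 0"
  shows "(m+1) * ((real k)^2 + 2*real k + m) * weight_prod m k
           \<le> m * ((real k)^2 + real k + m + 1) * weight_prod (m+1) k"
proof (induction k)
  case 0 then show ?case by (simp add: algebra_simps)
next
  case (Suc k)
  define y where "y = real k"
  define x where "x = y + 1"
  define s where "s = x^2"
  define a where "a = x^2 + 2*x + m"
  have x: "real (Suc k) = x" unfolding x_def y_def by simp
  have y0: "y \<ge> 0" and s0: "s > 0" unfolding s_def x_def y_def by simp_all
  have a0: "a \<ge> 0" unfolding a_def x_def using m0 y0 by simp
  have Y0: "weight_prod (m+1) k \<ge> 0" using m0 by (simp add: weight_prod_nonneg)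
  have IH: "(m+1)*(y^2+2*y+m) * weight_prod m k \<le> m*(y^2+y+m+1) * weight_prod (m+1) k"
    using Suc.IH unfolding y_def .
  have W_m: "weight_prod m (Suc k) = weight_prod m k * (y^2+2*y+m) / s"
    using s0 unfolding weight_prod_Suc x s_def x_def by (simp add: field_simps power2_eq_square)
  have W_m1: "weight_prod (m+1) (Suc k) = weight_prod (m+1) k * (s+m) / s"
    using s0 unfolding weight_prod_Suc x s_def by (simp add: field_simps)
  have poly: "a * (y^2+y+m+1) \<le> (x^2+x+m+1) * (s+m)"
  proof -
    have "(x^2+x+m+1) * (s+m) = a * (y^2+y+m+1) + (2*y^2+2*y)"
      unfolding a_def s_def x_def by (simp add: algebra_simps power2_eq_square)
    then show ?thesis using y0 by simp
  qed
  have "(m+1)*a * weight_prod m (Suc k) = a * ((m+1)*(y^2+2*y+m) * weight_prod m k) / s"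
    unfolding W_m by (simp add: field_simps)
  also have "\<dots> \<le> a * (m*(y^2+y+m+1) * weight_prod (m+1) k) / s"
    using IH a0 s0 by (intro divide_right_mono mult_left_mono) auto
  also have "\<dots> = (a * (y^2+y+m+1)) * (m * weight_prod (m+1) k) / s"
    by (simp add: algebra_simps)
  also have "\<dots> \<le> ((x^2+x+m+1) * (s+m)) * (m * weight_prod (m+1) k) / s"
    using poly m0 Y0 s0 by (intro divide_right_mono mult_right_mono) auto
  also have "\<dots> = m*(x^2+x+m+1) * weight_prod (m+1) (Suc k)"
    unfolding W_m1 by (simp add: mult_ac)
  finally show ?case unfolding a_def x by simp
qed

lemma weight_prod_step:
  fixes m :: real
  assumes m0: "m \<ge> 0"
  shows "weight_prod m (Suc k) + (m + 1 + real k) / ((m + 1) * real (Suc k)) * weight_prod (m+1) k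
           \<le> weight_prod (m+1) (Suc k)"
proof -
  define y where "y = real k"
  define s where "s = (y+1)^2"
  define X where "X = weight_prod m k"
  define Y where "Y = weight_prod (m+1) k"
  define c where "c = (m + 1 + real k) / ((m + 1) * real (Suc k))"
  define p where "p = weight_prod m (Suc k)"
  define q where "q = weight_prod (m+1) (Suc k)"
  have s0: "s > 0" unfolding s_def y_def by simp
  have ratio: "(m+1)*(y^2+2*y+m) * X \<le> m*(y^2+y+m+1) * Y"
    using weight_prod_ratio_bound[OF m0, of k] unfolding y_def X_def Y_def .
  have ps: "p * s = X * (y^2+2*y+m)"
    using s0 unfolding p_def X_def weight_prod_Suc s_def y_def
    by (simp add: field_simps power2_eq_square)
  have qs: "q * s = Y * (s+m)"
    using s0 unfolding q_def Y_def weight_prod_Suc s_def y_def by (simp add: field_simps)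
  have cc: "c * ((m+1)*(y+1)) = m+y+1"
  proof -
    have "(m+1)*(y+1) \<noteq> 0" using m0 unfolding y_def by simp
    moreover have "c = (m+y+1) / ((m+1)*(y+1))" unfolding c_def y_def by (simp add: algebra_simps)
    ultimately show ?thesis by simp
  qed
  have "(p + c*Y) * ((m+1)*s) = (m+1)*(p*s) + (c*((m+1)*(y+1)))*((y+1)*Y)"
    by (simp add: s_def power2_eq_square algebra_simps)
  also have "\<dots> = (m+1)*(X * (y^2+2*y+m)) + (m+y+1)*((y+1)*Y)"
    unfolding ps cc ..
  also have "\<dots> \<le> m*(y^2+y+m+1) * Y + (m+y+1)*((y+1)*Y)"
    using ratio by (simp add: algebra_simps)
  also have "\<dots> = (m+1)*(Y*(s+m))"
    by (simp add: s_def power2_eq_square algebra_simps)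
  also have "\<dots> = q * ((m+1)*s)"
    using qs by (simp add: algebra_simps)
  finally have "(p + c*Y) * ((m+1)*s) \<le> q * ((m+1)*s)" .
  moreover have "(m+1)*s > 0" using s0 m0 by simp
  ultimately have "p + c*Y \<le> q" by (simp add: mult_le_cancel_right_pos)
  then show ?thesis unfolding p_def c_def Y_def q_def .
qed

lemma phi_power_coeff_bound: "(phi_fps ^ n) $ k \<le> fact k * weight_prod (real n) k"
proof (induction n arbitrary: k)
  case 0
  then show ?case by (cases k) (simp_all add: weight_prod_zero_param)
next
  case (Suc n)
  show ?case
  proof (induction k)
    case 0
    then show ?case by (simp add: fps_power_zeroth)
  next
    case (Suc k)
    define m where "m = real n"
    define c where "c = (m + 1 + real k) / (m + 1)"
    define d where "d = (m + 1 + real k) / ((m + 1) * real (Suc k))"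
    have c0: "c \<ge> 0" unfolding c_def m_def by simp
    have fact_d: "fact (Suc k) * d = c * fact k"
    proof -
      have "real (Suc k) * d = c"
        unfolding c_def d_def by (simp del: of_nat_Suc)
      moreover have "fact (Suc k) * d = fact k * (real (Suc k) * d)"
        by (simp only: fact_Suc of_nat_mult mult_ac)
      ultimately show ?thesis by simp
    qed
    have "(phi_fps ^ Suc n) $ Suc k = (phi_fps ^ n) $ Suc k + c * (phi_fps ^ Suc n) $ k"
      using phi_power_coeff_rec[of n k] unfolding c_def m_def by (simp add: add_ac)
    also have "\<dots> \<le> fact (Suc k) * weight_prod m (Suc k) + c * (fact k * weight_prod (m+1) k)"
    proof (intro add_mono mult_left_mono c0)
      show "(phi_fps ^ n) $ Suc k \<le> fact (Suc k) * weight_prod m (Suc k)"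
        unfolding m_def by (rule \<open>\<And>k. (phi_fps ^ n) $ k \<le> fact k * weight_prod (real n) k\<close>)
      show "(phi_fps ^ Suc n) $ k \<le> fact k * weight_prod (m+1) k"
        using Suc.IH unfolding m_def by (simp only: of_nat_Suc add.commute)
    qed
    also have "\<dots> = fact (Suc k) * (weight_prod m (Suc k) + d * weight_prod (m+1) k)"
      by (simp only: distrib_left mult.assoc[symmetric] fact_d)
    also have "\<dots> \<le> fact (Suc k) * weight_prod (m+1) (Suc k)"
      unfolding m_def d_def by (intro mult_left_mono weight_prod_step) auto
    finally show ?case unfolding m_def by (simp only: of_nat_Suc add.commute)
  qed
qed

lemma inverse_square_prod_telescope:
  "(real k + 2) * (\<Prod>j=1..Suc k. 1 + 1 / (real j)^2) \<le> 4 * (real k + 1)"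
proof (induction k)
  case 0 then show ?case by simp
next
  case (Suc k)
  define x where "x = real k"
  define Q where "Q = (\<Prod>j=1..Suc k. 1 + 1 / (real j)^2)"
  define r where "r = 1 + 1/(x+2)^2"
  have x0: "x \<ge> 0" unfolding x_def by simp
  have IH: "(x+2) * Q \<le> 4*(x+1)" using Suc.IH unfolding x_def Q_def .
  have rr: "r * (x+2)^2 = (x+2)^2 + 1" unfolding r_def using x0 by (simp add: field_simps)
  have prod_eq: "(\<Prod>j=1..Suc (Suc k). 1 + 1 / (real j)^2) = Q * r"
    by (simp add: prod.cl_ivl_Suc x_def Q_def r_def add.commute)
  have poly: "(x+1)*((x+2)^2+1)*(x+3) \<le> (x+2)^4"
    using x0 by (simp add: algebra_simps power2_eq_square power4_eq_xxxx)
  have "((x+3) * (Q*r)) * (x+2)^3 = ((x+2)*Q) * (r*(x+2)^2) * (x+3)"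
    by (simp add: power2_eq_square power3_eq_cube algebra_simps)
  also have "\<dots> \<le> (4*(x+1)) * ((x+2)^2+1) * (x+3)"
    unfolding rr using IH x0 by (intro mult_right_mono) auto
  also have "\<dots> = 4*((x+1)*((x+2)^2+1)*(x+3))" by (simp only: mult.assoc)
  also have "\<dots> \<le> 4*(x+2)^4" using poly by simp
  also have "\<dots> = (4*(x+2)) * (x+2)^3" by (simp add: power4_eq_xxxx power3_eq_cube)
  finally have "((x+3) * (Q*r)) * (x+2)^3 \<le> (4*(x+2)) * (x+2)^3" .
  moreover have "(x+2)^3 > 0" using x0 by simp
  ultimately have "(x+3) * (Q*r) \<le> 4*(x+2)" by simp
  then show ?case unfolding prod_eq x_def by (simp add: algebra_simps)
qed

lemma inverse_square_prod_le_4: "(\<Prod>j=1..k. 1 + 1 / (real j)^2) \<le> 4"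
proof (cases k)
  case (Suc k')
  define Q where "Q = (\<Prod>j=1..Suc k'. 1 + 1 / (real j)^2)"
  have "(real k' + 2) * Q \<le> 4 * (real k' + 1)"
    using inverse_square_prod_telescope[of k'] unfolding Q_def .
  also have "\<dots> \<le> (real k' + 2) * 4" by simp
  finally have "Q \<le> 4" using mult_le_cancel_left_pos[of "real k' + 2" Q 4] by simp
  then show ?thesis using Suc unfolding Q_def by simp
qed simp

lemma weight_prod_le_power:
  assumes "n \<ge> 1"
  shows "weight_prod (real n) k \<le> 4 ^ (n - 1)"
proof -
  have "weight_prod (real n) k \<le> (\<Prod>j=1..k. (1 + 1 / (real j)^2) ^ (n - 1))"
    unfolding weight_prod_def
  proof (rule prod_mono)
    fix j assume "j \<in> {1..k}"
    have eq: "1 + (real n - 1) / (real j)^2 = 1 + real (n - 1) * (1 / (real j)^2)"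
      using assms by (simp add: of_nat_diff)
    have "1 + real (n - 1) * (1 / (real j)^2) \<le> (1 + 1 / (real j)^2) ^ (n - 1)"
      by (rule Bernoulli_inequality) (rule order.trans[of _ 0], simp_all)
    then show "0 \<le> 1 + (real n - 1) / (real j)^2 \<and>
               1 + (real n - 1) / (real j)^2 \<le> (1 + 1 / (real j)^2) ^ (n - 1)"
      unfolding eq by simp
  qed
  also have "\<dots> = (\<Prod>j=1..k. 1 + 1 / (real j)^2) ^ (n - 1)"
    by (rule prod_power_distrib[symmetric])
  also have "\<dots> \<le> 4 ^ (n - 1)"
    by (rule power_mono[OF inverse_square_prod_le_4], rule prod_nonneg) auto
  finally show ?thesis .
qed

theorem lemma5:
  fixes n k :: nat
  assumes "n \<ge> 1"
  shows "fps_nth (phi_fps ^ n) k \<le> fact k * (\<Prod>j=1..k. 1 + (real n - 1) / (real j)^2)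
       \<and> fact k * (\<Prod>j=1..k. 1 + (real n - 1) / (real j)^2) \<le> 6 ^ n * fact k"
proof
  show "fps_nth (phi_fps ^ n) k \<le> fact k * (\<Prod>j=1..k. 1 + (real n - 1) / (real j)^2)"
    using phi_power_coeff_bound[of n k] unfolding weight_prod_def .
  have "(4::real) ^ (n - 1) \<le> 6 ^ n"
    by (rule order.trans[OF power_mono power_increasing]) auto
  then have "weight_prod (real n) k \<le> 6 ^ n"
    using weight_prod_le_power[OF assms, of k] by linarith
  then show "fact k * (\<Prod>j=1..k. 1 + (real n - 1) / (real j)^2) \<le> 6 ^ n * fact k"
    unfolding weight_prod_def by (simp add: mult.commute)
qed

end
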